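(* For every positive integer $n$, $$\sum_{k=1}^{n}N^p_{bin}(k)\,s(n-k)=\vartheta_2(n)+1,$$ where $s(0)=1$ and $s(m)=(-1)^{h(m)}$ for $m\ge1$.
   Context: A binary partition of $m$ is a partition of $m$ all of whose parts are powers of $2$ (including $2^0=1$). $N^p_{bin}(m)$ is the total number of parts, summed over all binary partitions of $m$. $h(m)$ is the number of ones in the binary representation of $m$. $\vartheta_2(n)$ is the $2$-adic valuation of $n$. *)

theory Defs
  imports Main "HOL-Library.Multiset" "HOL-Computational_Algebra.Primes"
begin

definition bin_partitions :: "nat \<Rightarrow> nat multiset set" where
  "bin_partitions m = {P. (\<forall>x\<in>#P. \<exists>i. x = 2 ^ i) \<and> sum_mset P = m}"

definition N_bin :: "nat \<Rightarrow> nat" where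
  "N_bin m = (\<Sum>P\<in>bin_partitions m. size P)"

definition h :: "nat \<Rightarrow> nat" where
  "h m = card {i. bit m i}"

definition s :: "nat \<Rightarrow> int" where
  "s m = (if m = 0 then 1 else (-1) ^ h m)"

end

theory Submission
  imports Defs "HOL-Computational_Algebra.Formal_Power_Series"
begin

(* Let b(m) be the number of binary partitions of m and B, S, N the generating functions of
   b, s and N^p_bin. Either a binary partition of m contains a part 1, or all its parts are even
   and can be halved; so b(m) = b(m - 1) + [m even] b(m/2), that is B(x) (1 - x) = B(x^2).
   Likewise s(2m) = s(m) and s(2m + 1) = -s(m) give S(x) = (1 - x) S(x^2). Hence F = B S satisfies
   F(x) = F(x^2) and F(0) = 1, which forces F = 1.
   Removing a block of j parts equal to 2^i from a partition of m leaves a partition of m - j 2^i,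
   and t = j 2^i has exactly multiplicity 2 t + 1 such factorisations; counting all blocks of all
   partitions gives N(m) = sum_t (multiplicity 2 t + 1) b(m - t). So N = C B for
   C(x) = sum_{t >= 1} (multiplicity 2 t + 1) x^t, and N S = C. *)

unbundle fps_syntax

lemma finite_bit_set_nat: "finite {i. bit (m::nat) i}"
proof (rule finite_subset)
  show "{i. bit m i} \<subseteq> {..<m}"
  proof safe
    fix i assume "bit m i"
    show "i < m"
    proof (rule ccontr)
      assume "\<not> i < m"
      then have "m < 2 ^ i"
        using less_exp[of i] by linarith
      with \<open>bit m i\<close> show False
        by (simp add: bit_iff_odd)
    qed
  qed
qed simp

lemma bit_set_nat_div2:
  "{i. bit m i} = (if odd m then {0} else {}) \<union> Suc ` {i. bit (m div 2 :: nat) i}"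
proof (rule set_eqI)
  fix i show "i \<in> {i. bit m i} \<longleftrightarrow> i \<in> (if odd m then {0} else {}) \<union> Suc ` {i. bit (m div 2) i}"
    by (cases i) (auto simp: bit_0 bit_Suc)
qed

lemma h_rec: "h m = (if odd m then 1 else 0) + h (m div 2)"
  unfolding h_def by (subst bit_set_nat_div2) (simp add: card_image finite_bit_set_nat)

lemma s_eq_minus_one_power_h: "s m = (-1) ^ h m"
  by (simp add: s_def h_def)

lemma s_double: "s (2 * m) = s m"
  using h_rec[of "2 * m"] by (simp add: s_eq_minus_one_power_h)

lemma s_Suc_double: "s (Suc (2 * m)) = - s m"
  using h_rec[of "Suc (2 * m)"] by (simp add: s_eq_minus_one_power_h)

lemma sum_mset_subseteq_le:
  fixes P :: "'a::canonically_ordered_monoid_add multiset"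
  assumes "R \<subseteq># P"
  shows "sum_mset R \<le> sum_mset P"
proof -
  have "sum_mset P = sum_mset R + sum_mset (P - R)"
    using assms by (metis subset_mset.add_diff_inverse sum_mset.union)
  then show ?thesis
    using le_iff_add by blast
qed

lemma size_le_sum_mset:
  assumes "\<And>x. x \<in># P \<Longrightarrow> (1::nat) \<le> x"
  shows "size P \<le> sum_mset P"
proof -
  have "size P = (\<Sum>x\<in>#P. 1)"
    by (rule size_eq_sum_mset)
  also have "\<dots> \<le> (\<Sum>x\<in>#P. x)"
    using assms by (rule sum_mset_mono)
  finally show ?thesis
    by simp
qed

lemma size_eq_card_replicate_submsets:
  "size P = card {(x, j). 0 < j \<and> replicate_mset j x \<subseteq># P}"
proof -
  have "{(x, j). 0 < j \<and> replicate_mset j x \<subseteq># P} = Sigma (set_mset P) (\<lambda>x. {1..count P x})"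
    by (auto simp flip: count_le_replicate_mset_subset_eq intro: count_inI)
  then show ?thesis
    by (simp add: size_multiset_overloaded_eq)
qed

lemma card_power_factorizations:
  fixes p t :: nat
  assumes "1 < p" "0 < t"
  shows "card {(x, j). (\<exists>i. x = p ^ i) \<and> j * x = t} = multiplicity p t + 1"
proof -
  have dvd_iff: "p ^ i dvd t \<longleftrightarrow> i \<le> multiplicity p t" for i
    using assms by (intro power_dvd_iff_le_multiplicity) auto
  have "{(x, j). (\<exists>i. x = p ^ i) \<and> j * x = t} = (\<lambda>i. (p ^ i, t div p ^ i)) ` {..multiplicity p t}"
  proof (intro subset_antisym subsetI)
    fix a assume "a \<in> {(x, j). (\<exists>i. x = p ^ i) \<and> j * x = t}"
    then obtain i j where a: "a = (p ^ i, j)" and t: "j * p ^ i = t"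
      by blast
    then have "i \<le> multiplicity p t"
      using dvd_iff by (metis dvd_triv_right)
    moreover have "j = t div p ^ i"
      using t assms(1) by auto
    ultimately show "a \<in> (\<lambda>i. (p ^ i, t div p ^ i)) ` {..multiplicity p t}"
      using a by auto
  next
    fix a assume "a \<in> (\<lambda>i. (p ^ i, t div p ^ i)) ` {..multiplicity p t}"
    then obtain i where "a = (p ^ i, t div p ^ i)" "p ^ i dvd t"
      using dvd_iff by auto
    then show "a \<in> {(x, j). (\<exists>i. x = p ^ i) \<and> j * x = t}"
      by auto
  qed
  moreover have "inj (\<lambda>i. (p ^ i, t div p ^ i))"
    using assms(1) by (auto intro: injI)
  ultimately show ?thesis
    by (simp add: card_image inj_on_subset)
qed

definition bin_partition_count :: "nat \<Rightarrow> nat" where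
  "bin_partition_count m = card (bin_partitions m)"

lemma bin_partition_sum: "P \<in> bin_partitions m \<Longrightarrow> sum_mset P = m"
  by (simp add: bin_partitions_def)

lemma bin_partition_part: "P \<in> bin_partitions m \<Longrightarrow> x \<in># P \<Longrightarrow> \<exists>i. x = 2 ^ i"
  by (simp add: bin_partitions_def)

lemma bin_partition_part_ge_1: "P \<in> bin_partitions m \<Longrightarrow> x \<in># P \<Longrightarrow> 1 \<le> x"
proof -
  assume "P \<in> bin_partitions m" "x \<in># P"
  then obtain i where "x = 2 ^ i"
    using bin_partition_part by blast
  then show "1 \<le> x"
    by simp
qed

lemma bin_partition_part_le: "P \<in> bin_partitions m \<Longrightarrow> x \<in># P \<Longrightarrow> x \<le> m"
proof -
  assume "P \<in> bin_partitions m" "x \<in># P"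
  then have "sum_mset {#x#} \<le> sum_mset P"
    by (intro sum_mset_subseteq_le) simp
  with \<open>P \<in> bin_partitions m\<close> show "x \<le> m"
    by (simp add: bin_partition_sum)
qed

lemma bin_partition_size_le: "P \<in> bin_partitions m \<Longrightarrow> size P \<le> m"
  using size_le_sum_mset[of P] bin_partition_part_ge_1 unfolding bin_partitions_def by blast

lemma finite_bin_partitions: "finite (bin_partitions m)"
proof (rule finite_subset)
  show "bin_partitions m \<subseteq> (\<Union>k\<le>m. multisets_of_size {..m} k)"
    using bin_partition_part_le bin_partition_size_le unfolding multisets_of_size_def by blast
qed auto

lemma bin_partitions_0: "bin_partitions 0 = {{#}}"
proof -
  have "P = {#}" if "P \<in> bin_partitions 0" for P
  proof -
    have "\<forall>x\<in>#P. x = 0"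
      using that by (simp add: bin_partitions_def)
    then show ?thesis
      using bin_partition_part_ge_1[OF that] by (metis multiset_nonemptyE not_one_le_zero)
  qed
  then show ?thesis
    by (auto simp: bin_partitions_def)
qed

lemma bin_partition_count_0: "bin_partition_count 0 = 1"
  by (simp add: bin_partition_count_def bin_partitions_0)

lemma bin_partitions_union:
  "P \<in> bin_partitions m \<Longrightarrow> Q \<in> bin_partitions n \<Longrightarrow> P + Q \<in> bin_partitions (m + n)"
  unfolding bin_partitions_def by auto

lemma bin_partitions_diff:
  assumes "P \<in> bin_partitions m" "R \<in> bin_partitions r" "R \<subseteq># P"
  shows "P - R \<in> bin_partitions (m - r)"
proof -
  have "\<forall>x\<in>#P - R. \<exists>i. x = 2 ^ i"
    using assms(1) unfolding bin_partitions_def by (blast dest: in_diffD)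
  moreover have "sum_mset (P - R) = m - r"
    using assms unfolding bin_partitions_def by (simp add: sum_mset_diff)
  ultimately show ?thesis
    unfolding bin_partitions_def by blast
qed

lemma card_bin_partitions_containing:
  assumes R: "R \<in> bin_partitions r" and "r \<le> m"
  shows "card {P \<in> bin_partitions m. R \<subseteq># P} = bin_partition_count (m - r)"
proof -
  have "{P \<in> bin_partitions m. R \<subseteq># P} = (\<lambda>Q. Q + R) ` bin_partitions (m - r)"
  proof (intro subset_antisym subsetI)
    fix P assume "P \<in> {P \<in> bin_partitions m. R \<subseteq># P}"
    then have "P - R \<in> bin_partitions (m - r)" "P = (P - R) + R"
      using R bin_partitions_diff by auto
    then show "P \<in> (\<lambda>Q. Q + R) ` bin_partitions (m - r)"
      by blast
  next
    fix P assume "P \<in> (\<lambda>Q. Q + R) ` bin_partitions (m - r)"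
    then obtain Q where "Q \<in> bin_partitions (m - r)" "P = Q + R"
      by blast
    then have "P \<in> bin_partitions (m - r + r)"
      using R bin_partitions_union by blast
    then show "P \<in> {P \<in> bin_partitions m. R \<subseteq># P}"
      using \<open>r \<le> m\<close> \<open>P = Q + R\<close> by simp
  qed
  moreover have "inj_on (\<lambda>Q. Q + R) (bin_partitions (m - r))"
    by (rule inj_onI) simp
  ultimately show ?thesis
    by (simp add: bin_partition_count_def card_image)
qed

lemma bin_partitions_double:
  assumes "Q \<in> bin_partitions k"
  shows "image_mset ((*) 2) Q \<in> bin_partitions (2 * k)"
proof -
  have "\<exists>i. 2 * x = 2 ^ i" if "x \<in># Q" for x
  proof -
    obtain i where "x = 2 ^ i"
      using assms \<open>x \<in># Q\<close> unfolding bin_partitions_def by blast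
    then have "2 * x = 2 ^ Suc i"
      by simp
    then show ?thesis ..
  qed
  moreover have "sum_mset (image_mset ((*) 2) Q) = 2 * k"
    using assms sum_mset_distrib_left[of 2 "\<lambda>x. x" Q] unfolding bin_partitions_def by simp
  ultimately show ?thesis
    unfolding bin_partitions_def by auto
qed

lemma bin_partition_without_1_halve:
  assumes P: "P \<in> bin_partitions n" and "1 \<notin># P"
  obtains Q where "Q \<in> bin_partitions (n div 2)" "P = image_mset ((*) 2) Q" "even n"
proof -
  define Q where "Q = image_mset (\<lambda>x. x div 2) P"
  have halve: "x = 2 * (x div 2) \<and> (\<exists>i. x div 2 = 2 ^ i)" if "x \<in># P" for x
  proof -
    obtain i where i: "x = 2 ^ i"
      using P \<open>x \<in># P\<close> unfolding bin_partitions_def by blast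
    have "i \<noteq> 0"
      using \<open>1 \<notin># P\<close> \<open>x \<in># P\<close> i by (metis power_0)
    then obtain j where "i = Suc j"
      using not0_implies_Suc by blast
    then show ?thesis
      using i by simp
  qed
  have PQ: "P = image_mset ((*) 2) Q"
  proof -
    have "image_mset ((*) 2) Q = image_mset (\<lambda>x. 2 * (x div 2)) P"
      by (simp add: Q_def multiset.map_comp comp_def)
    also have "\<dots> = image_mset (\<lambda>x. x) P"
      using halve by (intro image_mset_cong) simp
    finally show ?thesis
      by simp
  qed
  have n: "n = 2 * sum_mset Q"
    using P sum_mset_distrib_left[of 2 "\<lambda>x. x" Q] unfolding PQ bin_partitions_def by simp
  have "Q \<in> bin_partitions (n div 2)"
    using halve n unfolding Q_def bin_partitions_def by auto
  with PQ n show ?thesis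
    using that by simp
qed

lemma bin_partitions_without_1:
  "{P \<in> bin_partitions n. 1 \<notin># P} =
     (if even n then image_mset ((*) 2) ` bin_partitions (n div 2) else {})"
proof (cases "even n")
  case True
  have "image_mset ((*) 2) ` bin_partitions (n div 2) \<subseteq> {P \<in> bin_partitions n. 1 \<notin># P}"
    using bin_partitions_double[of _ "n div 2"] True by auto
  with True show ?thesis
    by (auto elim: bin_partition_without_1_halve)
next
  case False
  then show ?thesis
    by (auto elim: bin_partition_without_1_halve)
qed

lemma bin_partition_count_rec:
  assumes "n > 0"
  shows "bin_partition_count n =
    bin_partition_count (n - 1) + (if even n then bin_partition_count (n div 2) else 0)"
proof -
  have split: "bin_partition_count n =
      card {P \<in> bin_partitions n. 1 \<in># P} + card {P \<in> bin_partitions n. 1 \<notin># P}"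
    unfolding bin_partition_count_def using finite_bin_partitions
    by (subst card_Un_disjoint[symmetric]) (auto intro: arg_cong[of _ _ card])
  have "{#1#} \<in> bin_partitions 1"
    by (simp add: bin_partitions_def exI[of _ 0])
  then have with_1: "card {P \<in> bin_partitions n. 1 \<in># P} = bin_partition_count (n - 1)"
    using card_bin_partitions_containing[of "{#1#}" 1 n] assms by simp
  have "inj (image_mset ((*) (2::nat)))"
    by (rule multiset.inj_map) (simp add: inj_def)
  then have "inj_on (image_mset ((*) (2::nat))) (bin_partitions (n div 2))"
    by (metis inj_on_subset subset_UNIV)
  then have without_1: "card {P \<in> bin_partitions n. 1 \<notin># P} =
      (if even n then bin_partition_count (n div 2) else 0)"
    unfolding bin_partitions_without_1 by (simp add: card_image bin_partition_count_def)
  show ?thesis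
    unfolding split with_1 without_1 ..
qed

text \<open>A pair \<open>(x, j)\<close> encodes a block of \<open>j\<close> copies of the part \<open>x\<close>; a part of multiplicity \<open>k\<close>
  lies in exactly the \<open>k\<close> blocks \<open>(x, 1), \<dots>, (x, k)\<close>.\<close>

definition bin_blocks :: "nat \<Rightarrow> (nat \<times> nat) set" where
  "bin_blocks m = {(x, j). (\<exists>i. x = 2 ^ i) \<and> 0 < j \<and> j * x \<le> m}"

lemma finite_bin_blocks: "finite (bin_blocks m)"
proof (rule finite_subset)
  show "bin_blocks m \<subseteq> {..m} \<times> {..m}"
  proof safe
    fix x j assume "(x, j) \<in> bin_blocks m"
    then have "0 < x" "0 < j" "j * x \<le> m"
      by (auto simp: bin_blocks_def)
    moreover have "x \<le> j * x" "j \<le> j * x"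
      using \<open>0 < x\<close> \<open>0 < j\<close> by simp_all
    ultimately show "x \<le> m" "j \<le> m"
      by linarith+
  qed
qed simp

lemma size_bin_partition_eq_card_bin_blocks:
  assumes P: "P \<in> bin_partitions m"
  shows "size P = card {(x, j) \<in> bin_blocks m. replicate_mset j x \<subseteq># P}"
proof -
  have "(x, j) \<in> bin_blocks m" if "0 < j" "replicate_mset j x \<subseteq># P" for x j
  proof -
    have "j * x \<le> m"
      using sum_mset_subseteq_le[OF \<open>replicate_mset j x \<subseteq># P\<close>] bin_partition_sum[OF P] by simp
    moreover have "x \<in># P"
      using that by (auto simp flip: count_le_replicate_mset_subset_eq intro: count_inI)
    ultimately show ?thesis
      using \<open>0 < j\<close> bin_partition_part[OF P] by (simp add: bin_blocks_def)
  qed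
  then have "{(x, j). 0 < j \<and> replicate_mset j x \<subseteq># P} =
      {(x, j) \<in> bin_blocks m. replicate_mset j x \<subseteq># P}"
    unfolding bin_blocks_def by auto
  then show ?thesis
    using size_eq_card_replicate_submsets by metis
qed

lemma N_bin_eq_convolution:
  "N_bin m = (\<Sum>t=1..m. (multiplicity 2 t + 1) * bin_partition_count (m - t))"
proof -
  let ?A = "bin_blocks m"
  have containing: "card {P \<in> bin_partitions m. replicate_mset j x \<subseteq># P} = bin_partition_count (m - j * x)"
    if "(x, j) \<in> ?A" for x j
  proof (rule card_bin_partitions_containing)
    show "replicate_mset j x \<in> bin_partitions (j * x)"
      using that unfolding bin_blocks_def bin_partitions_def by auto
    show "j * x \<le> m"
      using that by (simp add: bin_blocks_def)
  qed
  have "N_bin m = (\<Sum>P\<in>bin_partitions m. card {(x, j) \<in> ?A. replicate_mset j x \<subseteq># P})"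
    unfolding N_bin_def using size_bin_partition_eq_card_bin_blocks by (rule sum.cong[OF refl])
  also have "\<dots> = (\<Sum>(x, j)\<in>?A. bin_partition_count (m - j * x))"
    using sum_multicount_gen[OF finite_bin_partitions finite_bin_blocks] containing
    by (simp add: case_prod_unfold)
  also have "\<dots> = (\<Sum>t=1..m. \<Sum>(x, j)\<in>{(x, j) \<in> ?A. j * x = t}. bin_partition_count (m - j * x))"
  proof -
    have "(\<lambda>(x, j). j * x) ` ?A \<subseteq> {1..m}"
      unfolding bin_blocks_def by auto
    then have "(\<Sum>t=1..m. \<Sum>(x, j)\<in>{a \<in> ?A. (\<lambda>(x, j). j * x) a = t}. bin_partition_count (m - j * x)) =
        (\<Sum>(x, j)\<in>?A. bin_partition_count (m - j * x))"
      by (rule sum.group[OF finite_bin_blocks finite_atLeastAtMost])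
    moreover have "{a \<in> ?A. (\<lambda>(x, j). j * x) a = t} = {(x, j) \<in> ?A. j * x = t}" for t
      by auto
    ultimately show ?thesis
      by simp
  qed
  also have "\<dots> = (\<Sum>t=1..m. (multiplicity 2 t + 1) * bin_partition_count (m - t))"
  proof (rule sum.cong[OF refl])
    fix t assume t: "t \<in> {1..m}"
    then have "{(x, j) \<in> ?A. j * x = t} = {(x, j). (\<exists>i. x = 2 ^ i) \<and> j * x = t}"
      unfolding bin_blocks_def by auto
    then show "(\<Sum>(x, j)\<in>{(x, j) \<in> ?A. j * x = t}. bin_partition_count (m - j * x)) =
        (multiplicity 2 t + 1) * bin_partition_count (m - t)"
      using card_power_factorizations[of 2 t] t by (simp add: case_prod_unfold)
  qed
  finally show ?thesis .
qed

lemma fps_compose_X_squared_nth: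
  fixes f :: "'a::comm_ring_1 fps"
  shows "(f oo fps_X ^ 2) $ n = (if even n then f $ (n div 2) else 0)"
proof -
  have "(f oo fps_X ^ 2) $ n = (\<Sum>i=0..n. if i = n div 2 \<and> even n then f $ i else 0)"
    unfolding fps_compose_nth power_mult[symmetric] fps_X_power_nth
    by (intro sum.cong) auto
  also have "\<dots> = (if even n then f $ (n div 2) else 0)"
    by simp
  finally show ?thesis .
qed

lemma fps_compose_X_squared_fixed:
  fixes f :: "'a::comm_ring_1 fps"
  assumes fixed: "f oo fps_X ^ 2 = f"
  shows "f = fps_const (f $ 0)"
proof (rule fps_ext)
  fix n show "f $ n = fps_const (f $ 0) $ n"
  proof (induction n rule: less_induct)
    case (less n)
    have "f $ n = (if even n then f $ (n div 2) else 0)"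
      using fps_compose_X_squared_nth[of f n] unfolding fixed .
    moreover have "f $ (n div 2) = 0" if "even n" "n \<noteq> 0"
      using less[of "n div 2"] that by (auto elim!: evenE)
    ultimately show ?case
      by (cases "n = 0") auto
  qed
qed

definition bin_partition_fps :: "int fps" where
  "bin_partition_fps = Abs_fps (\<lambda>n. int (bin_partition_count n))"

definition s_fps :: "int fps" where
  "s_fps = Abs_fps s"

definition N_bin_fps :: "int fps" where
  "N_bin_fps = Abs_fps (\<lambda>n. int (N_bin n))"

definition power_of_2_divisors_fps :: "int fps" where
  "power_of_2_divisors_fps = Abs_fps (\<lambda>t. if t = 0 then 0 else int (multiplicity 2 t) + 1)"

lemma bin_partition_fps_times_1_minus_X:
  "bin_partition_fps * (1 - fps_X) = bin_partition_fps oo fps_X ^ 2"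
proof (rule fps_ext)
  fix n
  have "(bin_partition_fps * (1 - fps_X)) $ n =
      int (bin_partition_count n) - (if n = 0 then 0 else int (bin_partition_count (n - 1)))"
    by (simp add: algebra_simps bin_partition_fps_def)
  also have "\<dots> = (if even n then int (bin_partition_count (n div 2)) else 0)"
    using bin_partition_count_rec[of n] by (simp add: bin_partition_count_0)
  finally show "(bin_partition_fps * (1 - fps_X)) $ n = (bin_partition_fps oo fps_X ^ 2) $ n"
    by (simp add: fps_compose_X_squared_nth bin_partition_fps_def)
qed

lemma s_fps_eq: "s_fps = (1 - fps_X) * (s_fps oo fps_X ^ 2)"
proof (rule fps_ext)
  fix n
  have "((1 - fps_X) * (s_fps oo fps_X ^ 2)) $ n =
      (s_fps oo fps_X ^ 2) $ n - (if n = 0 then 0 else (s_fps oo fps_X ^ 2) $ (n - 1))"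
    by (simp add: algebra_simps)
  also have "\<dots> = s n"
  proof (cases "even n")
    case True
    then obtain m where "n = 2 * m"
      by blast
    then show ?thesis
    proof (cases "m = 0")
      case True
      then show ?thesis
        using \<open>n = 2 * m\<close> by (simp add: fps_compose_X_squared_nth s_fps_def s_def)
    next
      case False
      then show ?thesis
        using \<open>n = 2 * m\<close> by (simp add: fps_compose_X_squared_nth s_fps_def s_double)
    qed
  next
    case False
    then obtain m where "n = Suc (2 * m)"
      by (metis oddE Suc_eq_plus1)
    then show ?thesis
      by (simp add: fps_compose_X_squared_nth s_fps_def s_Suc_double)
  qed
  finally show "s_fps $ n = ((1 - fps_X) * (s_fps oo fps_X ^ 2)) $ n"
    by (simp add: s_fps_def)
qed

lemma bin_partition_fps_times_s_fps: "bin_partition_fps * s_fps = 1"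
proof -
  let ?F = "bin_partition_fps * s_fps"
  have "?F = bin_partition_fps * (1 - fps_X) * (s_fps oo fps_X ^ 2)"
    by (subst s_fps_eq) (simp add: mult.assoc)
  also have "\<dots> = ?F oo fps_X ^ 2"
    by (simp add: bin_partition_fps_times_1_minus_X fps_compose_mult_distrib)
  finally have "?F = fps_const (?F $ 0)"
    by (intro fps_compose_X_squared_fixed) simp
  moreover have "?F $ 0 = 1"
    by (simp add: bin_partition_fps_def s_fps_def bin_partition_count_0 s_def)
  ultimately show ?thesis
    by simp
qed

lemma N_bin_fps_eq: "N_bin_fps = power_of_2_divisors_fps * bin_partition_fps"
proof (rule fps_ext)
  fix m
  have "(power_of_2_divisors_fps * bin_partition_fps) $ m =
      (\<Sum>t=0..m. power_of_2_divisors_fps $ t * bin_partition_fps $ (m - t))"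
    by (rule fps_mult_nth)
  also have "\<dots> = (\<Sum>t=1..m. power_of_2_divisors_fps $ t * bin_partition_fps $ (m - t))"
    by (simp add: sum.atLeast_Suc_atMost power_of_2_divisors_fps_def)
  also have "\<dots> = int (N_bin m)"
    by (simp add: N_bin_eq_convolution power_of_2_divisors_fps_def bin_partition_fps_def algebra_simps)
  finally show "N_bin_fps $ m = (power_of_2_divisors_fps * bin_partition_fps) $ m"
    by (simp add: N_bin_fps_def)
qed

theorem corollary8:
  fixes n :: nat
  assumes "n \<ge> 1"
  shows "(\<Sum>k=1..n. int (N_bin k) * s (n - k)) = int (multiplicity (2::nat) n) + 1"
proof -
  have "N_bin_fps * s_fps = power_of_2_divisors_fps"
    by (simp add: N_bin_fps_eq mult.assoc bin_partition_fps_times_s_fps)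
  then have "(N_bin_fps * s_fps) $ n = power_of_2_divisors_fps $ n"
    by simp
  then have "(\<Sum>k=0..n. int (N_bin k) * s (n - k)) = int (multiplicity 2 n) + 1"
    using assms by (simp add: fps_mult_nth N_bin_fps_def s_fps_def power_of_2_divisors_fps_def)
  moreover have "N_bin 0 = 0"
    by (simp add: N_bin_eq_convolution)
  ultimately show ?thesis
    by (simp add: sum.atLeast_Suc_atMost)
qed

end
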